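(* Let $X$ be a finite-dimensional real Banach space and let $A \subset X$ be a bounded set with $d(0, A) > 0$. Let $I$ be an index set with $m$ elements and $\{x_i : i \in I\} \subset S_X$. If for every selection $\phi$ of the subdifferential mapping $\partial\|\cdot\|$ one has $\sup_{i \in I} \phi(x_i)(x) > 0$ for every $x \in \overline{A}$, then there exist $y_i \in \mathbb{R}^+ x_i$ and $r_i > 0$ with $\|y_i\| \ge r_i$ for all $i \in I$ such that $\{B(y_i, r_i)\}_{i \in I}$ covers $A$.
   Context: $d(0,A)=\inf\{\|a\|:a\in A\}$; $\overline{A}$ is the closure. $\mathbb{R}^+ x_i = \{ t x_i : t > 0\}$; $B(c,r) = \{ z : \|c - z\| < r\}$. $\partial\|x\| = \{ x^* \in S_{X^*} : x^*(x) = \|x\|\}$ for $x \neq 0$; a selection of $\partial\|\cdot\|$ is a map $\phi$ with $\phi(x) \in \partial\|x\|$ for each non-zero $x$. *)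

theory Defs
  imports "HOL-Analysis.Analysis"
begin

definition norm_subdiff :: "'a::real_normed_vector \<Rightarrow> ('a \<Rightarrow>\<^sub>L real) set" where
  "norm_subdiff x = {f. norm f = 1 \<and> blinfun_apply f x = norm x}"

definition is_subdiff_selection :: "('a::real_normed_vector \<Rightarrow> ('a \<Rightarrow>\<^sub>L real)) \<Rightarrow> bool" where
  "is_subdiff_selection \<phi> \<longleftrightarrow> (\<forall>x. x \<noteq> 0 \<longrightarrow> \<phi> x \<in> norm_subdiff x)"

end

theory Submission
  imports Defs
begin

text \<open>
  Suppose a point \<open>z\<close> of the closure of \<open>A\<close> lies in none of the balls \<open>B(t x\<^sub>i, t)\<close>, \<open>t > 0\<close>.
  For each \<open>i\<close> this means \<open>\<parallel>x\<^sub>i - s z\<parallel> \<ge> 1\<close> for all \<open>s \<ge> 0\<close>, and a Hahn-Banach argument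
  (in finite dimensions: extend a norm-dominated functional one vector at a time) gives a
  norming functional of \<open>x\<^sub>i\<close> that is \<open>\<le> 0\<close> at \<open>z\<close>. Using these functionals at the points
  \<open>x\<^sub>i\<close> and arbitrary norming functionals elsewhere yields a selection of \<open>\<partial>\<parallel>\<cdot>\<parallel>\<close>
  violating the hypothesis. So these balls cover the closure of \<open>A\<close>, which is compact because
  the space is finite-dimensional; since \<open>B(t x\<^sub>i, t)\<close> grows with \<open>t\<close>, one radius \<open>T\<close> serves
  all points, and \<open>y\<^sub>i = T x\<^sub>i\<close>, \<open>r\<^sub>i = T\<close> work.
\<close>

lemma compact_coordinate_box:
  "compact (PiE UNIV (\<lambda>b. if b \<in> C then {-R..R} else {0::real}))"
proof -
  have "compactin (product_topology (\<lambda>_. euclidean) UNIV)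
          (PiE UNIV (\<lambda>b. if b \<in> C then {-R..R} else {0::real}))"
    by (subst compactin_PiE) auto
  then show ?thesis by (simp add: euclidean_product_topology)
qed

lemma mem_coordinate_box_iff:
  "l \<in> PiE UNIV (\<lambda>b. if b \<in> C then {-R..R} else {0::real})
     \<longleftrightarrow> (\<forall>b\<in>C. \<bar>l b\<bar> \<le> R) \<and> (\<forall>b. b \<notin> C \<longrightarrow> l b = 0)"
  by (auto simp: PiE_iff abs_le_iff)

lemma coordinates_norm_lower_bound_of_unit_sum:
  fixes C :: "'a::real_normed_vector set"
  assumes "finite C"
    and unit: "\<And>l. (\<Sum>b\<in>C. \<bar>l b\<bar>) = 1 \<Longrightarrow> m \<le> norm (\<Sum>b\<in>C. l b *\<^sub>R b)"
  shows "m * (\<Sum>b\<in>C. \<bar>l b\<bar>) \<le> norm (\<Sum>b\<in>C. l b *\<^sub>R b)"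
proof (cases "(\<Sum>b\<in>C. \<bar>l b\<bar>) = 0")
  case True
  then show ?thesis by simp
next
  case False
  define s where "s = (\<Sum>b\<in>C. \<bar>l b\<bar>)"
  have "s > 0" using False by (simp add: s_def order_less_le sum_nonneg)
  have "(\<Sum>b\<in>C. \<bar>l b / s\<bar>) = 1"
    using \<open>s > 0\<close> by (simp add: s_def sum_divide_distrib[symmetric])
  then have "m \<le> norm (\<Sum>b\<in>C. (l b / s) *\<^sub>R b)" by (rule unit)
  also have "(\<Sum>b\<in>C. (l b / s) *\<^sub>R b) = (1 / s) *\<^sub>R (\<Sum>b\<in>C. l b *\<^sub>R b)"
    by (simp add: scaleR_sum_right)
  finally show ?thesis using \<open>s > 0\<close> by (simp add: s_def field_simps)
qed

lemma independent_coordinates_norm_lower_bound: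
  fixes C :: "'a::real_normed_vector set"
  assumes "finite C" "independent C"
  shows "\<exists>m>0. \<forall>l. m * (\<Sum>b\<in>C. \<bar>l b\<bar>) \<le> norm (\<Sum>b\<in>C. l b *\<^sub>R b)"
proof (cases "C = {}")
  case True
  then show ?thesis by (auto intro: exI[of _ 1])
next
  case False
  then obtain b0 where "b0 \<in> C" by blast
  define E where "E l = (\<Sum>b\<in>C. l b *\<^sub>R b)" for l :: "'a \<Rightarrow> real"
  define K where "K = PiE UNIV (\<lambda>b. if b \<in> C then {-1..1} else {0::real})
                      \<inter> {l. (\<Sum>b\<in>C. \<bar>l b\<bar>) = 1}"
  have "closed {l :: 'a \<Rightarrow> real. (\<Sum>b\<in>C. \<bar>l b\<bar>) = 1}"
    by (intro closed_Collect_eq continuous_intros) auto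
  then have "compact K"
    unfolding K_def by (rule compact_Int_closed[OF compact_coordinate_box])
  moreover have "(\<lambda>b. if b = b0 then 1 else 0) \<in> K"
    unfolding K_def using \<open>b0 \<in> C\<close> \<open>finite C\<close>
    by (auto simp: mem_coordinate_box_iff if_distrib cong: if_cong)
  moreover have "continuous_on K (\<lambda>l. norm (E l))"
    unfolding E_def
    by (rule continuous_on_subset[of UNIV]) (intro continuous_intros, auto)
  ultimately obtain l0 where l0: "l0 \<in> K" "\<forall>l\<in>K. norm (E l0) \<le> norm (E l)"
    using continuous_attains_inf[of K "\<lambda>l. norm (E l)"] by blast
  have "E l0 \<noteq> 0"
  proof
    assume "E l0 = 0"
    then have "\<forall>b\<in>C. l0 b = 0"
      using assms dependent_finite[of C] unfolding E_def by metis
    then show False using l0(1) unfolding K_def by simp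
  qed
  have "norm (E l0) \<le> norm (E l)" if "(\<Sum>b\<in>C. \<bar>l b\<bar>) = 1" for l
  proof -
    define l' where "l' b = (if b \<in> C then l b else 0)" for b
    have "\<bar>l b\<bar> \<le> 1" if "b \<in> C" for b
      using member_le_sum[of b C "\<lambda>b. \<bar>l b\<bar>"] that \<open>finite C\<close> \<open>(\<Sum>b\<in>C. \<bar>l b\<bar>) = 1\<close> by simp
    with \<open>(\<Sum>b\<in>C. \<bar>l b\<bar>) = 1\<close> have "l' \<in> K"
      unfolding K_def by (simp add: mem_coordinate_box_iff l'_def)
    moreover have "E l' = E l" unfolding E_def l'_def by (intro sum.cong) auto
    ultimately show ?thesis using l0(2) by metis
  qed
  then have "\<forall>l. norm (E l0) * (\<Sum>b\<in>C. \<bar>l b\<bar>) \<le> norm (E l)"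
    unfolding E_def using coordinates_norm_lower_bound_of_unit_sum[OF \<open>finite C\<close>] by blast
  moreover have "norm (E l0) > 0" using \<open>E l0 \<noteq> 0\<close> by simp
  ultimately have "\<exists>m>0. \<forall>l. m * (\<Sum>b\<in>C. \<bar>l b\<bar>) \<le> norm (E l)" by blast
  then show ?thesis unfolding E_def .
qed

lemma finite_span_bounded_closed_imp_compact:
  fixes S :: "'a::real_normed_vector set" and B :: "'a set"
  assumes B: "finite B" "span B = UNIV" and "bounded S" "closed S"
  shows "compact S"
proof -
  obtain C where C: "C \<subseteq> B" "independent C" "B \<subseteq> span C"
    using maximal_independent_subset[of B] by blast
  have "finite C" using C(1) B(1) finite_subset by blast
  have "span C = UNIV" using B(2) C(3) by (metis span_mono span_span top.extremum_uniqueI)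
  obtain m where m: "m > 0" "\<forall>l. m * (\<Sum>b\<in>C. \<bar>l b\<bar>) \<le> norm (\<Sum>b\<in>C. l b *\<^sub>R b)"
    using independent_coordinates_norm_lower_bound[OF \<open>finite C\<close> C(2)] by blast
  obtain R where R: "\<forall>w\<in>S. norm w \<le> R" using \<open>bounded S\<close> bounded_iff by blast
  define E where "E l = (\<Sum>b\<in>C. l b *\<^sub>R b)" for l :: "'a \<Rightarrow> real"
  define P where "P = PiE UNIV (\<lambda>b. if b \<in> C then {- (R / m)..R / m} else {0::real})"
  have "S \<subseteq> E ` P"
  proof
    fix w assume "w \<in> S"
    obtain u where "w = E u"
      using \<open>span C = UNIV\<close> span_finite[OF \<open>finite C\<close>] unfolding E_def by blast
    define l where "l b = (if b \<in> C then u b else 0)" for b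
    have "E l = w" unfolding \<open>w = E u\<close> E_def l_def by (intro sum.cong) auto
    have "m * (\<Sum>b\<in>C. \<bar>l b\<bar>) \<le> R"
      using m(2)[rule_format, of l] R \<open>w \<in> S\<close> \<open>E l = w\<close> unfolding E_def by fastforce
    moreover have "\<bar>l b\<bar> \<le> (\<Sum>b\<in>C. \<bar>l b\<bar>)" if "b \<in> C" for b
      using member_le_sum[of b C "\<lambda>b. \<bar>l b\<bar>"] that \<open>finite C\<close> by simp
    ultimately have "m * \<bar>l b\<bar> \<le> R" if "b \<in> C" for b
      using that m(1) by (meson mult_left_mono order_trans less_imp_le)
    then have "l \<in> P"
      unfolding P_def mem_coordinate_box_iff using m(1)
      by (auto simp: l_def pos_le_divide_eq mult.commute)
    with \<open>E l = w\<close> show "w \<in> E ` P" by blast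
  qed
  moreover have "compact (E ` P)"
    unfolding P_def E_def
  proof (rule compact_continuous_image[OF continuous_on_subset[of UNIV] compact_coordinate_box])
    show "continuous_on UNIV (\<lambda>l. \<Sum>b\<in>C. l b *\<^sub>R b)"
      by (intro continuous_intros) auto
  qed simp
  ultimately show ?thesis
    using compact_Int_closed[of "E ` P" S] \<open>closed S\<close> by (simp add: Int_absorb1)
qed

lemma exists_linear_functional_vanishing_on_span:
  fixes v :: "'a::real_vector"
  assumes "v \<notin> span C"
  shows "\<exists>h::'a \<Rightarrow> real. linear h \<and> (\<forall>w\<in>span C. h w = 0) \<and> h v = 1"
proof -
  obtain C' where C': "C' \<subseteq> span C" "independent C'" "span C \<subseteq> span C'"
    using maximal_independent_subset by blast
  have "span C' = span C"
    using C' by (metis span_mono span_span subset_antisym)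
  with assms have "v \<notin> span C'" by simp
  with C'(2) have "independent (insert v C')"
    by (simp add: independent_insert)
  then obtain h :: "'a \<Rightarrow> real"
    where h: "linear h" "\<forall>b\<in>insert v C'. h b = (if b = v then 1 else 0)"
    using linear_independent_extend[of "insert v C'" "\<lambda>b. if b = v then 1 else 0"] by blast
  have "h b = 0" if "b \<in> C'" for b
    using h(2) that \<open>v \<notin> span C'\<close> span_base by fastforce
  then have "h w = 0" if "w \<in> span C" for w
    using linear_eq_0_on_span[OF h(1)] that C'(3) by blast
  with h show ?thesis by auto
qed

lemma norm_dominated_extension_value:
  fixes f :: "'a::real_normed_vector \<Rightarrow> real"
  assumes f: "linear f" "\<forall>w\<in>span C. f w \<le> norm w" and "v \<notin> span C"
    and lower: "\<forall>m\<in>span C. f m - norm (m - v) \<le> c"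
    and upper: "\<forall>m\<in>span C. c \<le> norm (m + v) - f m"
  shows "\<exists>g. linear g \<and> (\<forall>w\<in>span C. g w = f w) \<and> g v = c
           \<and> (\<forall>w\<in>span (insert v C). g w \<le> norm w)"
proof -
  obtain h :: "'a \<Rightarrow> real" where h: "linear h" "\<forall>w\<in>span C. h w = 0" "h v = 1"
    using exists_linear_functional_vanishing_on_span[OF \<open>v \<notin> span C\<close>] by blast
  define g where "g w = f w + (c - f v) * h w" for w
  have "linear g"
    unfolding g_def using linear_compose_scale_right[OF h(1), of "c - f v"]
    by (intro linear_compose_add f(1)) simp
  have g_eq: "g (m + t *\<^sub>R v) = f m + t * c" if "m \<in> span C" for m t
    using that h linear_add[OF f(1)] linear_add[OF h(1)] linear_scale[OF f(1)] linear_scale[OF h(1)]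
    unfolding g_def by (simp add: algebra_simps)
  have "g w \<le> norm w" if w: "w \<in> span (insert v C)" for w
  proof -
    obtain t where "w - t *\<^sub>R v \<in> span C"
      using w span_breakdown_eq by blast
    define m where "m = w - t *\<^sub>R v"
    have w: "w = m + t *\<^sub>R v" and m: "m \<in> span C" using \<open>w - t *\<^sub>R v \<in> span C\<close> by (simp_all add: m_def)
    have fm: "f (r *\<^sub>R m) = r * f m" for r using linear_scale[OF f(1)] by simp
    consider "t = 0" | "t > 0" | "t < 0" by linarith
    then show ?thesis
    proof cases
      case 1
      then show ?thesis using g_eq[OF m, of 0] f(2) m w by simp
    next
      case 2
      have "(1 / t) *\<^sub>R m + v = (1 / t) *\<^sub>R w" using 2 w by (simp add: algebra_simps)
      then have "c \<le> norm w / t - f m / t"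
        using upper m 2 fm by (auto simp: span_scale dest: bspec[of _ _ "(1 / t) *\<^sub>R m"])
      then have "t * c \<le> norm w - f m" using 2 by (simp add: field_simps)
      then show ?thesis using g_eq[OF m] w by simp
    next
      case 3
      define s where "s = - t"
      have "s > 0" using 3 by (simp add: s_def)
      have "(1 / s) *\<^sub>R m - v = (1 / s) *\<^sub>R w" using \<open>s > 0\<close> w by (simp add: s_def algebra_simps)
      then have "f m / s - norm w / s \<le> c"
        using lower m \<open>s > 0\<close> fm by (auto simp: span_scale dest: bspec[of _ _ "(1 / s) *\<^sub>R m"])
      then have "f m - norm w \<le> s * c" using \<open>s > 0\<close> by (simp add: field_simps)
      then show ?thesis using g_eq[OF m] w by (simp add: s_def)
    qed
  qed
  moreover have "g w = f w" if "w \<in> span C" for w using that h(2) unfolding g_def by simp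
  moreover have "g v = c" unfolding g_def using h(3) by simp
  ultimately show ?thesis using \<open>linear g\<close> by auto
qed

lemma norm_dominated_extension_step:
  fixes f :: "'a::real_normed_vector \<Rightarrow> real"
  assumes f: "linear f" "\<forall>w\<in>span C. f w \<le> norm w"
    and d: "\<forall>m\<in>span C. f m - norm (m - v) \<le> d"
  shows "\<exists>g. linear g \<and> (\<forall>w\<in>span C. g w = f w) \<and> g v \<le> d
           \<and> (\<forall>w\<in>span (insert v C). g w \<le> norm w)"
proof (cases "v \<in> span C")
  case True
  then show ?thesis using f d[rule_format, of v] by (auto simp: span_redundant)
next
  case False
  have sandwich: "f m - norm (m - v) \<le> norm (m' + v) - f m'"
    if "m \<in> span C" "m' \<in> span C" for m m'
  proof -
    have "f m + f m' = f (m + m')" using linear_add[OF f(1)] by simp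
    also have "\<dots> \<le> norm (m + m')" using f(2) that span_add by blast
    also have "\<dots> \<le> norm (m - v) + norm (m' + v)"
      using norm_triangle_ineq[of "m - v" "m' + v"] by simp
    finally show ?thesis by simp
  qed
  define c where "c = (SUP m\<in>span C. f m - norm (m - v))"
  have "\<forall>m\<in>span C. f m - norm (m - v) \<le> c"
    unfolding c_def using sandwich[OF _ span_zero] by (auto intro!: cSUP_upper bdd_aboveI2)
  moreover have "\<forall>m\<in>span C. c \<le> norm (m + v) - f m"
    unfolding c_def using sandwich by (auto intro!: cSUP_least)
  moreover have "c \<le> d"
    unfolding c_def using d span_zero by (intro cSUP_least) auto
  ultimately show ?thesis
    using norm_dominated_extension_value[OF f False] by fastforce
qed

lemma norm_dominated_extension_finite:
  fixes f :: "'a::real_normed_vector \<Rightarrow> real"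
  assumes "finite S" "linear f" "\<forall>w\<in>span C. f w \<le> norm w"
  shows "\<exists>g. linear g \<and> (\<forall>w\<in>span C. g w = f w) \<and> (\<forall>w\<in>span (C \<union> S). g w \<le> norm w)"
  using assms
proof (induction S arbitrary: C f rule: finite_induct)
  case empty
  then show ?case by auto
next
  case (insert v S)
  have "f m - norm (m - v) \<le> norm v" if "m \<in> span C" for m
    using bspec[OF insert.prems(2) that] norm_triangle_sub[of m v] by linarith
  then obtain g1 where g1: "linear g1" "\<forall>w\<in>span C. g1 w = f w"
      "\<forall>w\<in>span (insert v C). g1 w \<le> norm w"
    using norm_dominated_extension_step[OF insert.prems] by blast
  obtain g where g: "linear g" "\<forall>w\<in>span (insert v C). g w = g1 w"
      "\<forall>w\<in>span (insert v C \<union> S). g w \<le> norm w"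
    using insert.IH[OF g1(1,3)] by blast
  have "span C \<subseteq> span (insert v C)" by (simp add: span_mono subset_insertI)
  then have "\<forall>w\<in>span C. g w = f w" using g(2) g1(2) by auto
  with g(1,3) show ?case by auto
qed

lemma norm_dominated_extension:
  fixes f :: "'a::real_normed_vector \<Rightarrow> real" and B :: "'a set"
  assumes "finite B" "span B = UNIV" "linear f" "\<forall>w\<in>span C. f w \<le> norm w"
  shows "\<exists>g. linear g \<and> (\<forall>w\<in>span C. g w = f w) \<and> (\<forall>w. g w \<le> norm w)"
proof -
  have "span (C \<union> B) = UNIV" using assms(2) by (metis span_mono sup_ge2 top.extremum_uniqueI)
  then show ?thesis using norm_dominated_extension_finite[OF assms(1,3,4)] by auto
qed

lemma norm_Blinfun_le_1:
  fixes g :: "'a::real_normed_vector \<Rightarrow> real"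
  assumes g: "linear g" "\<And>w. g w \<le> norm w"
  shows "bounded_linear g" "norm (Blinfun g) \<le> 1"
proof -
  have abs_le: "\<bar>g w\<bar> \<le> norm w" for w
    using g(2)[of w] g(2)[of "- w"] linear_scale[OF g(1), of "-1" w] by simp
  show "bounded_linear g"
    using abs_le linear_add[OF g(1)] linear_scale[OF g(1)] by (intro bounded_linear_intro[of _ 1]) auto
  then show "norm (Blinfun g) \<le> 1"
    using abs_le by (intro norm_blinfun_bound) (auto simp: bounded_linear_Blinfun_apply)
qed

lemma exists_norm_subdiff_nonpos:
  fixes x z :: "'a::real_normed_vector" and B :: "'a set"
  assumes B: "finite B" "span B = UNIV" and "x \<noteq> 0"
    and outside: "\<forall>t>0. t * norm x \<le> norm (t *\<^sub>R x - z)"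
  shows "\<exists>F\<in>norm_subdiff x. blinfun_apply F z \<le> 0"
proof -
  obtain h :: "'a \<Rightarrow> real" where h: "linear h" "h x = 1"
    using exists_linear_functional_vanishing_on_span[of x "{}"] \<open>x \<noteq> 0\<close> by auto
  define f where "f w = norm x * h w" for w
  have f_ray: "f (k *\<^sub>R x) = k * norm x" for k
    unfolding f_def using linear_scale[OF h(1)] h(2) by simp
  have "linear f"
    unfolding f_def using linear_compose_scale_right[OF h(1), of "norm x"] by simp
  moreover have "\<forall>w\<in>span {x}. f w \<le> norm w"
    by (auto simp: span_singleton f_ray intro!: mult_right_mono)
  moreover have "\<forall>m\<in>span {x}. f m - norm (m - z) \<le> 0"
  proof
    fix m assume "m \<in> span {x}"
    then obtain k where "m = k *\<^sub>R x" by (auto simp: span_singleton)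
    moreover have "k * norm x \<le> norm (k *\<^sub>R x - z)"
      using outside by (cases "k > 0") (auto intro: order_trans[OF mult_nonpos_nonneg])
    ultimately show "f m - norm (m - z) \<le> 0" by (simp add: f_ray)
  qed
  ultimately obtain f1 where f1: "linear f1" "\<forall>w\<in>span {x}. f1 w = f w" "f1 z \<le> 0"
      "\<forall>w\<in>span {z, x}. f1 w \<le> norm w"
    using norm_dominated_extension_step by blast
  obtain g where g: "linear g" "\<forall>w\<in>span {z, x}. g w = f1 w" "\<forall>w. g w \<le> norm w"
    using norm_dominated_extension[OF B f1(1,4)] by blast
  define F where "F = Blinfun g"
  have F: "blinfun_apply F = g" "norm F \<le> 1"
    unfolding F_def using norm_Blinfun_le_1[OF g(1) g(3)[rule_format]] bounded_linear_Blinfun_apply by auto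
  have "g x = norm x"
    using g(2) f1(2) f_ray[of 1] by (simp add: span_base)
  moreover have "g z \<le> 0"
    using g(2) f1(3) by (simp add: span_base)
  moreover have "norm F = 1"
    using F \<open>g x = norm x\<close> norm_blinfun[of F x] \<open>x \<noteq> 0\<close> by simp
  ultimately show ?thesis
    using F unfolding norm_subdiff_def by auto
qed

lemma ball_ray_mono:
  fixes x :: "'a::real_normed_vector"
  assumes "0 \<le> t" "t \<le> T"
  shows "ball (t *\<^sub>R x) (t * norm x) \<subseteq> ball (T *\<^sub>R x) (T * norm x)"
proof
  fix w assume "w \<in> ball (t *\<^sub>R x) (t * norm x)"
  then have "norm (t *\<^sub>R x - w) < t * norm x" by (simp add: dist_norm)
  moreover have "norm (T *\<^sub>R x - t *\<^sub>R x) = (T - t) * norm x"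
    using assms by (simp add: scaleR_diff_left[symmetric])
  moreover have "norm (T *\<^sub>R x - w) \<le> norm (T *\<^sub>R x - t *\<^sub>R x) + norm (t *\<^sub>R x - w)"
    using norm_triangle_ineq[of "T *\<^sub>R x - t *\<^sub>R x" "t *\<^sub>R x - w"] by simp
  ultimately have "norm (T *\<^sub>R x - w) < T * norm x"
    using left_diff_distrib[of T t "norm x"] by linarith
  then show "w \<in> ball (T *\<^sub>R x) (T * norm x)" by (simp add: dist_norm)
qed

lemma compact_subset_ray_balls_uniform:
  fixes x :: "'i \<Rightarrow> 'a::real_normed_vector"
  assumes "compact K" and cover: "\<forall>z\<in>K. \<exists>i\<in>I. \<exists>t>0. z \<in> ball (t *\<^sub>R x i) (t * norm (x i))"
  shows "\<exists>T>0. K \<subseteq> (\<Union>i\<in>I. ball (T *\<^sub>R x i) (T * norm (x i)))"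
proof -
  define U where "U T = (\<Union>i\<in>I. ball (T *\<^sub>R x i) (T * norm (x i)))" for T
  have "K \<subseteq> \<Union> (U ` {0<..})"
    using cover unfolding U_def by fastforce
  then obtain D where D: "D \<subseteq> {0<..}" "finite D" "K \<subseteq> \<Union> (U ` D)"
    using compactE_image[OF \<open>compact K\<close>, of "{0<..}" U] unfolding U_def by blast
  define T where "T = Max (insert 1 D)"
  have "U t \<subseteq> U T" if "t \<in> D" for t
    using ball_ray_mono[of t T] that D(1,2) unfolding U_def T_def by fastforce
  with D(3) have "K \<subseteq> U T" by blast
  moreover have "T > 0" using D(2) by (simp add: T_def Max_gr_iff)
  ultimately show ?thesis unfolding U_def by blast
qed

lemma ray_ball_cover_of_subdiff_selections:
  fixes x :: "'i \<Rightarrow> 'a::real_normed_vector" and B :: "'a set"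
  assumes B: "finite B" "span B = UNIV" and nonzero: "\<forall>i\<in>I. x i \<noteq> 0"
    and hyp: "\<forall>\<phi>. is_subdiff_selection \<phi> \<longrightarrow> (\<exists>i\<in>I. blinfun_apply (\<phi> (x i)) z > 0)"
  shows "\<exists>i\<in>I. \<exists>t>0. z \<in> ball (t *\<^sub>R x i) (t * norm (x i))"
proof (rule ccontr)
  assume not_covered: "\<not> ?thesis"
  have outside: "t * norm (x i) \<le> norm (t *\<^sub>R x i - z)" if "i \<in> I" "t > 0" for i t
  proof -
    have "z \<notin> ball (t *\<^sub>R x i) (t * norm (x i))" using not_covered that by blast
    then show ?thesis by (simp add: dist_norm not_less)
  qed
  have "\<exists>F\<in>norm_subdiff w. w \<in> x ` I \<longrightarrow> blinfun_apply F z \<le> 0" if "w \<noteq> 0" for w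
  proof (cases "w \<in> x ` I")
    case True
    then obtain i where "i \<in> I" "w = x i" by blast
    then have "\<forall>t>0. t * norm w \<le> norm (t *\<^sub>R w - z)" using outside by simp
    then show ?thesis using exists_norm_subdiff_nonpos[OF B that] by blast
  next
    case False
    have "\<forall>t>0. t * norm w \<le> norm (t *\<^sub>R w - 0)" by simp
    then show ?thesis using exists_norm_subdiff_nonpos[OF B that] False by blast
  qed
  then have "\<forall>w. \<exists>F. w \<noteq> 0 \<longrightarrow> F \<in> norm_subdiff w \<and> (w \<in> x ` I \<longrightarrow> blinfun_apply F z \<le> 0)"
    by blast
  from choice[OF this] obtain \<phi> where
    \<phi>: "\<forall>w. w \<noteq> 0 \<longrightarrow> \<phi> w \<in> norm_subdiff w \<and> (w \<in> x ` I \<longrightarrow> blinfun_apply (\<phi> w) z \<le> 0)"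
    by blast
  then have "is_subdiff_selection \<phi>" unfolding is_subdiff_selection_def by blast
  then obtain i where "i \<in> I" "blinfun_apply (\<phi> (x i)) z > 0" using hyp by blast
  moreover from \<open>i \<in> I\<close> have "blinfun_apply (\<phi> (x i)) z \<le> 0" using \<phi> nonzero by blast
  ultimately show False by simp
qed

theorem mainTheorem10:
  fixes A :: "'a::banach set" and I :: "'i set" and x :: "'i \<Rightarrow> 'a" and m :: nat
  assumes findim: "\<exists>B. finite B \<and> span B = (UNIV :: 'a set)"
    and bdd: "bounded A"
    and dist_pos: "\<exists>\<delta>>0. \<forall>a\<in>A. \<delta> \<le> norm a"
    and card_I: "finite I" "card I = m"
    and unit: "\<forall>i\<in>I. norm (x i) = 1"
    and hyp: "\<forall>\<phi>. is_subdiff_selection \<phi> \<longrightarrow>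
               (\<forall>z\<in>closure A. \<exists>i\<in>I. blinfun_apply (\<phi> (x i)) z > 0)"
  shows "\<exists>y r. (\<forall>i\<in>I. (\<exists>t>0. y i = t *\<^sub>R x i) \<and> r i > 0 \<and> norm (y i) \<ge> r i)
              \<and> A \<subseteq> (\<Union>i\<in>I. ball (y i) (r i))"
proof -
  obtain B :: "'a set" where B: "finite B" "span B = UNIV" using findim by blast
  have "\<forall>i\<in>I. x i \<noteq> 0" using unit by auto
  have cover: "\<forall>z\<in>closure A. \<exists>i\<in>I. \<exists>t>0. z \<in> ball (t *\<^sub>R x i) (t * norm (x i))"
    using ray_ball_cover_of_subdiff_selections[OF B \<open>\<forall>i\<in>I. x i \<noteq> 0\<close>] hyp by blast
  have "compact (closure A)"
    using finite_span_bounded_closed_imp_compact[OF B bounded_closure[OF bdd] closed_closure] .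
  then obtain T where "T > 0"
    and T: "closure A \<subseteq> (\<Union>i\<in>I. ball (T *\<^sub>R x i) (T * norm (x i)))"
    using compact_subset_ray_balls_uniform cover by blast
  have "A \<subseteq> (\<Union>i\<in>I. ball (T *\<^sub>R x i) (T * norm (x i)))"
    using closure_subset T by (rule order_trans)
  also have "\<dots> = (\<Union>i\<in>I. ball (T *\<^sub>R x i) T)"
    using unit by (intro SUP_cong) auto
  finally have "A \<subseteq> (\<Union>i\<in>I. ball (T *\<^sub>R x i) T)" .
  moreover have "\<forall>i\<in>I. (\<exists>t>0. T *\<^sub>R x i = t *\<^sub>R x i) \<and> T > 0 \<and> norm (T *\<^sub>R x i) \<ge> T"
    using unit \<open>T > 0\<close> by auto
  ultimately show ?thesis
    by (intro exI[of _ "\<lambda>i. T *\<^sub>R x i"] exI[of _ "\<lambda>_. T"] conjI)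
qed

end
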